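(* Let $\mathcal R$ be a ring of subsets of a set $X$ (closed under finite intersections and finite unions) with $\mathcal R\subseteq\mathcal R_{seq}$. Then for every sequence $\{U_n:n\in\omega\}\subseteq\mathcal R$, the union $\bigcup_{n\in\omega}U_n$ belongs to $\mathcal R_{seq}$.
   Context: $\mathcal R_{seq}$ is the family of all sets $W$ for which there exist sequences $\{U_n\}_{n\in\omega}\subseteq\mathcal R$ and $\{V_n\}_{n\in\omega}\subseteq\mathcal R$ with $U_k\subseteq X\setminus V_k\subseteq U_{k+1}$ for every $k\in\omega$ and $\bigcup_nU_n=W$. *)

theory Defs
  imports Main
begin

definition subset_ring :: "'a set \<Rightarrow> 'a set set \<Rightarrow> bool" where
  "subset_ring X R \<longleftrightarrow> R \<subseteq> Pow X \<and>
     (\<forall>A\<in>R. \<forall>B\<in>R. A \<inter> B \<in> R \<and> A \<union> B \<in> R)"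

definition R_seq :: "'a set \<Rightarrow> 'a set set \<Rightarrow> 'a set set" where
  "R_seq X R = {W. \<exists>U V. (\<forall>n. U n \<in> R) \<and> (\<forall>n. V n \<in> R) \<and>
      (\<forall>k::nat. U k \<subseteq> X - V k \<and> X - V k \<subseteq> U (Suc k)) \<and>
      (\<Union>n. U n) = W}"

end

theory Submission
  imports Defs
begin

text \<open>Given sandwich sequences A n, B n for countably many W n, diagonalise: at stage k
  take the union of the first k+1 sets A n k and the intersection of the corresponding B n k.
  Both stay in the ring, the sandwich condition is inherited termwise, and since each A n is
  increasing, A n k is absorbed into stage k + n, so nothing of any W n is lost.\<close>

lemma subset_ring_UN_atMost:
  assumes "subset_ring X R" and "\<And>n. f n \<in> R"
  shows "(\<Union>n\<le>(k::nat). f n) \<in> R"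
proof (induction k)
  case (Suc k)
  have "(\<Union>n\<le>Suc k. f n) = (\<Union>n\<le>k. f n) \<union> f (Suc k)" by (auto simp: atMost_Suc)
  with Suc assms show ?case unfolding subset_ring_def by auto
qed (simp add: assms)

lemma subset_ring_INT_atMost:
  assumes "subset_ring X R" and "\<And>n. f n \<in> R"
  shows "(\<Inter>n\<le>(k::nat). f n) \<in> R"
proof (induction k)
  case (Suc k)
  have "(\<Inter>n\<le>Suc k. f n) = (\<Inter>n\<le>k. f n) \<inter> f (Suc k)" by (auto simp: atMost_Suc)
  with Suc assms show ?case unfolding subset_ring_def by auto
qed (simp add: assms)

lemma sandwich_mono:
  fixes U V :: "nat \<Rightarrow> 'a set"
  assumes "\<And>k. U k \<subseteq> X - V k" and "\<And>k. X - V k \<subseteq> U (Suc k)"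
  shows "mono U"
  using assms by (intro mono_iff_le_Suc[THEN iffD2]) blast

lemma R_seq_UN:
  assumes ring: "subset_ring X R" and W: "\<And>n::nat. W n \<in> R_seq X R"
  shows "(\<Union>n. W n) \<in> R_seq X R"
proof -
  have "\<forall>n. \<exists>A B. (\<forall>k. A k \<in> R) \<and> (\<forall>k. B k \<in> R) \<and>
      (\<forall>k. A k \<subseteq> X - B k \<and> X - B k \<subseteq> A (Suc k)) \<and> (\<Union>k. A k) = W n"
    using W unfolding R_seq_def by blast
  then obtain A B where
    AR: "\<And>n k. A n k \<in> R" and BR: "\<And>n k. B n k \<in> R" and
    lower: "\<And>n k. A n k \<subseteq> X - B n k" and upper: "\<And>n k. X - B n k \<subseteq> A n (Suc k)" and
    UN_A: "\<And>n. (\<Union>k. A n k) = W n"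
    by metis
  define C where "C k = (\<Union>n\<le>k. A n k)" for k
  define D where "D k = (\<Inter>n\<le>k. B n k)" for k
  have "C k \<in> R" "D k \<in> R" for k
    unfolding C_def D_def
    by (simp_all add: subset_ring_UN_atMost[OF ring] subset_ring_INT_atMost[OF ring] AR BR)
  moreover have "C k \<subseteq> X - D k" "X - D k \<subseteq> C (Suc k)" for k
    using lower upper unfolding C_def D_def by (fastforce, fastforce)
  moreover have "(\<Union>k. C k) = (\<Union>n. W n)"
  proof
    show "(\<Union>k. C k) \<subseteq> (\<Union>n. W n)" unfolding C_def using UN_A by blast
    show "(\<Union>n. W n) \<subseteq> (\<Union>k. C k)"
    proof
      fix x assume "x \<in> (\<Union>n. W n)"
      then obtain n k where x: "x \<in> A n k" using UN_A by blast
      have "A n k \<subseteq> A n (k + n)"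
        using sandwich_mono[of "A n" X "B n", OF lower upper] by (simp add: monoD)
      with x have "x \<in> C (k + n)" unfolding C_def by auto
      then show "x \<in> (\<Union>k. C k)" by blast
    qed
  qed
  ultimately show ?thesis unfolding R_seq_def by blast
qed

theorem lemma2:
  fixes X :: "'a set" and R :: "'a set set"
  assumes "subset_ring X R"
    and "R \<subseteq> R_seq X R"
    and "\<forall>n::nat. U n \<in> R"
  shows "(\<Union>n. U n) \<in> R_seq X R"
  using assms by (intro R_seq_UN) blast+

end
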